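(* Let $Q=(V,E)$ be a natural join query over binary relations, and let $I$ be an instance in which every relation has at most $N\ge1$ tuples. Let $U\subset V$. Suppose: (1) for every attribute $Y\in V\setminus U$ there is a relation $R(X,Y)\in E$ with $X\in U$; (2) every relation $R(X,Y)\in E$ with $X\in U$ and $Y\in V\setminus U$ is light in $X$ in $I$. Let $T$ be the relation obtained by computing $Q_U(I)$ and then joining it with all relations $R(X,Y)^I$ with $X\in U$, $Y\in V\setminus U$. Equivalently, $T$ is the natural join of all relations of $I$ having at least one attribute in $U$. Then $|T|\le\mathrm{AGM}(Q)$.
   Context: A natural join query over binary relations consists of relation symbols, each having exactly two distinct attributes; relations are sets of tuples. The query graph $(V,E)$ has one vertex per attribute and one edge per relation. For a relation $R$ with attribute $X$ and a value $a$, the degree is $d_R(a)=|\{t\in R:t.X=a\}|$. $R$ is light in $X$ if $d_R(a)\le\sqrt N$ for all $a$. For $U\subseteq V$, the induced subgraph query $Q_U$ consists of the projections $\pi_U R$ of all relations $R$ having at least one attribute in $U$. A fractional vertex packing is a map $u:V\to[0,1]$ with $u_x+u_y\le1$ for every edge $\{x,y\}\in E$. Define $\mathrm{AGM}(Q)=\max_u N^{\sum_{x\in V}u_x}$, the maximum taken over fractional vertex packings $u$. *)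

theory Defs
  imports Complex_Main "HOL-Library.FuncSet"
begin

text \<open>A binary join query: a finite set E of relation symbols of type 'r; each symbol
  r has an ordered pair of attributes att r = (X, Y) of type 'v (required distinct).
  An instance D assigns to each symbol a set of tuples, tuples being pairs of values
  (first component = value of the first attribute, second = value of the second).\<close>

definition attrs :: "('r \<Rightarrow> 'v \<times> 'v) \<Rightarrow> 'r \<Rightarrow> 'v set" where
  "attrs att r = {fst (att r), snd (att r)}"

definition qvars :: "('r \<Rightarrow> 'v \<times> 'v) \<Rightarrow> 'r set \<Rightarrow> 'v set" where
  "qvars att E = (\<Union>r\<in>E. attrs att r)"

definition tval :: "('r \<Rightarrow> 'v \<times> 'v) \<Rightarrow> 'r \<Rightarrow> 'v \<Rightarrow> 'd \<times> 'd \<Rightarrow> 'd" where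
  "tval att r X t = (if X = fst (att r) then fst t else snd t)"

definition degree :: "('r \<Rightarrow> 'v \<times> 'v) \<Rightarrow> ('r \<Rightarrow> ('d \<times> 'd) set) \<Rightarrow> 'r \<Rightarrow> 'v \<Rightarrow> 'd \<Rightarrow> nat" where
  "degree att D r X a = card {t \<in> D r. tval att r X t = a}"

definition light :: "('r \<Rightarrow> 'v \<times> 'v) \<Rightarrow> ('r \<Rightarrow> ('d \<times> 'd) set) \<Rightarrow> real \<Rightarrow> 'r \<Rightarrow> 'v \<Rightarrow> bool" where
  "light att D N r X \<longleftrightarrow> (\<forall>a. real (degree att D r X a) \<le> sqrt N)"

text \<open>Natural join of the relations in a set F of symbols: tuples over the attribute set
  W = union of attributes of F, represented as functions extensional on W.\<close>
definition njoin :: "('r \<Rightarrow> 'v \<times> 'v) \<Rightarrow> ('r \<Rightarrow> ('d \<times> 'd) set) \<Rightarrow> 'r set \<Rightarrow> ('v \<Rightarrow> 'd) set" where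
  "njoin att D F = {f. f \<in> extensional (\<Union>r\<in>F. attrs att r) \<and>
      (\<forall>r\<in>F. (f (fst (att r)), f (snd (att r))) \<in> D r)}"

definition frac_packing :: "('r \<Rightarrow> 'v \<times> 'v) \<Rightarrow> 'r set \<Rightarrow> ('v \<Rightarrow> real) \<Rightarrow> bool" where
  "frac_packing att E u \<longleftrightarrow>
     (\<forall>x\<in>qvars att E. 0 \<le> u x \<and> u x \<le> 1) \<and>
     (\<forall>r\<in>E. u (fst (att r)) + u (snd (att r)) \<le> 1)"

text \<open>AGM(Q) = max over fractional vertex packings u of N^(sum of u); the maximum is
  attained (compact polytope), so it equals the supremum.\<close>
definition AGM :: "('r \<Rightarrow> 'v \<times> 'v) \<Rightarrow> 'r set \<Rightarrow> real \<Rightarrow> real" where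
  "AGM att E N = Sup {N powr (\<Sum>x\<in>qvars att E. u x) | u. frac_packing att E u}"

end

theory Submission
  imports Defs "HOL-Library.Product_Lexorder"
begin

text \<open>
  Let \<open>f\<close> be a uniformly random tuple of the join \<open>T\<close>. Order the attributes with \<open>U\<close> first and
  let \<open>e v = H(f v | f u, u before v)\<close>, so that \<open>\<Sum>v e v = ln |T|\<close> by the chain rule.
  By submodularity of entropy, for an edge \<open>{a, b}\<close> with \<open>a\<close> before \<open>b\<close> we get
  \<open>e a + e b \<le> H(f a, f b) \<le> ln N\<close> whenever the relation touches \<open>U\<close>. An attribute \<open>Y\<close> outside \<open>U\<close>
  comes after a neighbour \<open>X \<in> U\<close> in which its relation is light, so
  \<open>e Y \<le> H(f Y | f X) \<le> ln (sqrt N)\<close>; hence the edges avoiding \<open>U\<close> also satisfy \<open>e a + e b \<le> ln N\<close>.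
  Therefore \<open>e / ln N\<close> is a fractional vertex packing of weight \<open>ln |T| / ln N\<close>, i.e. \<open>|T| \<le> AGM\<close>.
\<close>

definition fiber :: "('v \<Rightarrow> 'd) set \<Rightarrow> 'v set \<Rightarrow> ('v \<Rightarrow> 'd) \<Rightarrow> ('v \<Rightarrow> 'd) set" where
  "fiber T A f = {g \<in> T. \<forall>x\<in>A. g x = f x}"

text \<open>\<open>scaled_entropy T A\<close> is \<open>|T|\<close> times the Shannon entropy (in nats) of the restriction to \<open>A\<close>
  of a uniformly random element of \<open>T\<close>; the scaling keeps all estimates free of division.\<close>

definition scaled_entropy :: "('v \<Rightarrow> 'd) set \<Rightarrow> 'v set \<Rightarrow> real" where
  "scaled_entropy T A = (\<Sum>f\<in>T. ln (card T / card (fiber T A f)))"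

definition scaled_entropy_gain :: "('v \<Rightarrow> 'd) set \<Rightarrow> 'v set \<Rightarrow> 'v \<Rightarrow> real" where
  "scaled_entropy_gain T A v = scaled_entropy T (insert v A) - scaled_entropy T A"

lemma fiber_subset: "fiber T A f \<subseteq> T"
  by (auto simp: fiber_def)

lemma finite_fiber: "finite T \<Longrightarrow> finite (fiber T A f)"
  by (simp add: fiber_def)

lemma self_in_fiber: "f \<in> T \<Longrightarrow> f \<in> fiber T A f"
  by (simp add: fiber_def)

lemma card_fiber_pos: "finite T \<Longrightarrow> f \<in> T \<Longrightarrow> 0 < card (fiber T A f)"
  using finite_fiber self_in_fiber card_gt_0_iff by fastforce

lemma fiber_antimono: "B \<subseteq> A \<Longrightarrow> fiber T A f \<subseteq> fiber T B f"
  by (auto simp: fiber_def)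

lemma fiber_eq_fiber: "g \<in> fiber T A f \<Longrightarrow> fiber T A g = fiber T A f"
  by (auto simp: fiber_def)

lemma fiber_Un:
  "g \<in> fiber T A f \<Longrightarrow> fiber T (A \<union> C) g = {h \<in> fiber T A f. restrict h C = restrict g C}"
  by (auto simp: fiber_def restrict_def fun_eq_iff)

lemma fiber_empty [simp]: "fiber T {} f = T"
  by (simp add: fiber_def)

lemma fiber_extensional:
  "T \<subseteq> extensional V \<Longrightarrow> f \<in> T \<Longrightarrow> fiber T V f = {f}"
  by (auto simp: fiber_def intro: extensionalityI)

lemma sum_fiber_swap:
  fixes w :: "('v \<Rightarrow> 'd) \<Rightarrow> real"
  assumes "finite T"
  shows "(\<Sum>f\<in>T. \<Sum>g\<in>fiber T A f. w g) = (\<Sum>g\<in>T. w g * card (fiber T A g))"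
proof -
  have "(\<Sum>f\<in>T. \<Sum>g\<in>fiber T A f. w g) = (\<Sum>g\<in>T. \<Sum>f\<in>{f\<in>T. g \<in> fiber T A f}. w g)"
    using sum.swap_restrict[OF assms assms, of "\<lambda>f g. w g" "\<lambda>f g. g \<in> fiber T A f"]
    by (simp add: fiber_def)
  also have "\<dots> = (\<Sum>g\<in>T. w g * card (fiber T A g))"
    by (rule sum.cong) (auto simp: fiber_def intro!: arg_cong[where f = card])
  finally show ?thesis .
qed

lemma sum_div_card_level_sets:
  assumes "finite K"
  shows "(\<Sum>g\<in>K. c (\<phi> g) / card {h \<in> K. \<phi> h = \<phi> g}) = (\<Sum>y\<in>\<phi> ` K. c y)"
proof -
  have "(\<Sum>g\<in>K. c (\<phi> g) / card {h \<in> K. \<phi> h = \<phi> g})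
      = (\<Sum>y\<in>\<phi> ` K. \<Sum>g\<in>{h \<in> K. \<phi> h = y}. c y / card {h \<in> K. \<phi> h = y})"
    by (subst sum.image_gen[OF assms]) (auto intro!: sum.cong)
  also have "\<dots> = (\<Sum>y\<in>\<phi> ` K. c y)"
    using assms by (intro sum.cong) (auto simp: card_gt_0_iff)
  finally show ?thesis .
qed

lemma scaled_entropy_diff:
  assumes "finite T"
  shows "scaled_entropy T A - scaled_entropy T B
       = (\<Sum>f\<in>T. ln (card (fiber T B f) / card (fiber T A f)))"
proof -
  have "ln (card T / card (fiber T A f)) - ln (card T / card (fiber T B f))
      = ln (card (fiber T B f) / card (fiber T A f))" if "f \<in> T" for f
  proof -
    have "0 < card T" using assms that card_gt_0_iff by blast
    then show ?thesis
      using card_fiber_pos[OF assms that, of A] card_fiber_pos[OF assms that, of B]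
      by (simp add: ln_divide_pos)
  qed
  then show ?thesis
    by (simp add: scaled_entropy_def flip: sum_subtractf)
qed

lemma scaled_entropy_empty [simp]: "scaled_entropy T {} = 0"
  by (simp add: scaled_entropy_def)

lemma scaled_entropy_extensional:
  assumes "finite T" "T \<subseteq> extensional V"
  shows "scaled_entropy T V = card T * ln (card T)"
  using assms by (simp add: scaled_entropy_def fiber_extensional)

lemma scaled_entropy_gain_nonneg:
  assumes "finite T"
  shows "0 \<le> scaled_entropy_gain T A v"
proof -
  have "0 \<le> ln (card (fiber T A f) / card (fiber T (insert v A) f))" if "f \<in> T" for f
  proof -
    have "card (fiber T (insert v A) f) \<le> card (fiber T A f)"
      by (intro card_mono finite_fiber assms fiber_antimono) blast
    then show ?thesis
      using card_fiber_pos[OF assms that, of "insert v A"] by simp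
  qed
  then show ?thesis
    by (simp add: scaled_entropy_gain_def scaled_entropy_diff[OF assms] sum_nonneg)
qed

lemma sum_inverse_card_fiber:
  assumes "finite T" "B \<subseteq> A"
  shows "(\<Sum>g\<in>fiber T B f. 1 / card (fiber T A g)) = card ((\<lambda>g. restrict g A) ` fiber T B f)"
proof -
  have "fiber T A g = {h \<in> fiber T B f. restrict h A = restrict g A}" if "g \<in> fiber T B f" for g
    using fiber_Un[OF that, of A] assms(2) by (simp add: Un_absorb1)
  then have "(\<Sum>g\<in>fiber T B f. 1 / card (fiber T A g))
      = (\<Sum>g\<in>fiber T B f. 1 / card {h \<in> fiber T B f. restrict h A = restrict g A})"
    by (intro sum.cong) auto
  also have "\<dots> = card ((\<lambda>g. restrict g A) ` fiber T B f)"
    using sum_div_card_level_sets[OF finite_fiber[OF assms(1)], of "\<lambda>_. 1"] by simp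
  finally show ?thesis .
qed

lemma scaled_entropy_diff_le:
  fixes d :: real
  assumes fin: "finite T" and "B \<subseteq> A" and d: "0 < d"
    and extensions: "\<And>f. f \<in> T \<Longrightarrow> card ((\<lambda>g. restrict g A) ` fiber T B f) \<le> d"
  shows "scaled_entropy T A - scaled_entropy T B \<le> card T * ln d"
proof -
  define a where "a f = real (card (fiber T A f))" for f
  define b where "b f = real (card (fiber T B f))" for f
  have pos: "0 < a f" "0 < b f" if "f \<in> T" for f
    using card_fiber_pos[OF fin that] by (simp_all add: a_def b_def)
  \<comment> \<open>Gibbs' inequality \<open>ln x \<le> x - 1\<close> at \<open>x = b f / (d * a f)\<close>\<close>
  have "ln (b f / a f) \<le> b f / (d * a f) - 1 + ln d" if "f \<in> T" for f
    using ln_le_minus_one[of "b f / (d * a f)"] pos[OF that] d by (simp add: ln_div ln_mult)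
  then have "scaled_entropy T A - scaled_entropy T B \<le> (\<Sum>f\<in>T. b f / (d * a f) - 1 + ln d)"
    unfolding scaled_entropy_diff[OF fin] by (intro sum_mono) (simp add: a_def b_def)
  also have "\<dots> = (\<Sum>f\<in>T. \<Sum>g\<in>fiber T B f. 1 / a g) / d - card T + card T * ln d"
    using sum_fiber_swap[OF fin, where A = B and w = "\<lambda>g. 1 / a g"]
    by (simp add: b_def sum.distrib sum_subtractf sum_divide_distrib mult.commute)
  also have "(\<Sum>f\<in>T. \<Sum>g\<in>fiber T B f. 1 / a g) \<le> (\<Sum>f\<in>T. d)"
    using extensions by (intro sum_mono) (simp add: a_def sum_inverse_card_fiber[OF fin assms(2)])
  finally show ?thesis
    using d by (simp add: divide_right_mono)
qed

lemma sum_card_fiber_ratio_le: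
  assumes fin: "finite T" and BA: "B \<subseteq> A"
  shows "(\<Sum>g\<in>fiber T A f. card (fiber T (insert v B) g) / card (fiber T (insert v A) g))
       \<le> card (fiber T B f)"
proof -
  define \<phi> where "\<phi> h = restrict h {v}" for h :: "'a \<Rightarrow> 'b"
  define c where "c y = real (card {h \<in> fiber T B f. \<phi> h = y})" for y
  \<comment> \<open>Group the \<open>A\<close>-class of \<open>f\<close> by the value at \<open>v\<close>: the groups are the \<open>insert v A\<close>-classes,
     and the \<open>insert v B\<close>-class of a member with value \<open>y\<close> at \<open>v\<close> has \<open>c y\<close> elements.\<close>
  have sub: "fiber T A f \<subseteq> fiber T B f"
    using BA fiber_antimono fiber_eq_fiber by blast
  have "card (fiber T (insert v B) g) / card (fiber T (insert v A) g)
      = c (\<phi> g) / card {h \<in> fiber T A f. \<phi> h = \<phi> g}" if g: "g \<in> fiber T A f" for g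
  proof -
    have "fiber T (insert v A) g = {h \<in> fiber T A f. \<phi> h = \<phi> g}"
      using fiber_Un[OF g, of "{v}"] by (simp add: \<phi>_def)
    moreover have "fiber T (insert v B) g = {h \<in> fiber T B f. \<phi> h = \<phi> g}"
      using fiber_Un[of g T B g "{v}"] fiber_eq_fiber[of g T B f] sub g self_in_fiber fiber_subset
      by (auto simp: \<phi>_def)
    ultimately show ?thesis by (simp add: c_def)
  qed
  then have "(\<Sum>g\<in>fiber T A f. card (fiber T (insert v B) g) / card (fiber T (insert v A) g))
      = (\<Sum>y\<in>\<phi> ` fiber T A f. c y)"
    using sum_div_card_level_sets[OF finite_fiber[OF fin], of c \<phi>] by simp
  also have "\<dots> \<le> (\<Sum>y\<in>\<phi> ` fiber T B f. c y)"
    using sub fin by (intro sum_mono2) (auto simp: c_def finite_fiber)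
  also have "\<dots> = card (fiber T B f)"
    using sum.image_gen[OF finite_fiber[OF fin, of B f], of "\<lambda>_. 1 :: real" \<phi>] by (simp add: c_def)
  finally show ?thesis .
qed

lemma scaled_entropy_gain_antimono:
  assumes fin: "finite T" and BA: "B \<subseteq> A"
  shows "scaled_entropy_gain T A v \<le> scaled_entropy_gain T B v"
proof -
  define a where "a f = real (card (fiber T A f))" for f
  define a' where "a' f = real (card (fiber T (insert v A) f))" for f
  define b where "b f = real (card (fiber T B f))" for f
  define b' where "b' f = real (card (fiber T (insert v B) f))" for f
  define W where "W f = b' f / (a' f * b f)" for f
  have pos: "0 < a f" "0 < a' f" "0 < b f" "0 < b' f" if "f \<in> T" for f
    using card_fiber_pos[OF fin that] by (simp_all add: a_def a'_def b_def b'_def)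
  \<comment> \<open>Gibbs' inequality \<open>ln x \<le> x - 1\<close> at \<open>x = a f * W f\<close>\<close>
  have "ln (a f / a' f) - ln (b f / b' f) \<le> a f * W f - 1" if "f \<in> T" for f
    using ln_le_minus_one[of "a f * W f"] pos[OF that] by (simp add: W_def ln_div ln_mult)
  then have "scaled_entropy_gain T A v - scaled_entropy_gain T B v \<le> (\<Sum>f\<in>T. a f * W f - 1)"
    unfolding scaled_entropy_gain_def scaled_entropy_diff[OF fin, of "insert v _"]
    by (simp add: a_def a'_def b_def b'_def flip: sum_subtractf) (intro sum_mono, simp)
  also have "\<dots> = (\<Sum>f\<in>T. \<Sum>g\<in>fiber T A f. W g) - card T"
    using sum_fiber_swap[OF fin, where A = A and w = W] by (simp add: a_def sum_subtractf mult.commute)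
  also have "(\<Sum>f\<in>T. \<Sum>g\<in>fiber T A f. W g) \<le> (\<Sum>f\<in>T. 1)"
  proof (intro sum_mono)
    fix f assume "f \<in> T"
    have "b g = b f" if "g \<in> fiber T A f" for g
      using that BA fiber_antimono fiber_eq_fiber by (metis b_def subsetD)
    then have "(\<Sum>g\<in>fiber T A f. W g) = (\<Sum>g\<in>fiber T A f. b' g / a' g) / b f"
      by (simp add: W_def sum_divide_distrib)
    also have "\<dots> \<le> 1"
      using sum_card_fiber_ratio_le[OF fin BA, where f = f and v = v] pos(3)[OF \<open>f \<in> T\<close>]
      by (simp add: a'_def b'_def b_def)
    finally show "(\<Sum>g\<in>fiber T A f. W g) \<le> 1" .
  qed
  finally show ?thesis by simp
qed

lemma sum_rank_increments:
  fixes rank :: "'a \<Rightarrow> 'b::linorder" and h :: "'a set \<Rightarrow> real"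
  assumes "finite V" "inj_on rank V"
  shows "(\<Sum>v\<in>V. h (insert v {x \<in> V. rank x < rank v}) - h {x \<in> V. rank x < rank v}) = h V - h {}"
  using assms
proof (induction V rule: finite_ranking_induct[where f = rank])
  case empty
  then show ?case by simp
next
  case (insert x S)
  show ?case
  proof (cases "x \<in> S")
    case True
    then show ?thesis using insert by (simp add: insert_absorb)
  next
    case False
    have "rank y < rank x" if "y \<in> S" for y
      using insert.hyps(2)[OF that] inj_onD[OF insert.prems, of y x] that False
      by (auto simp: order_le_less)
    then have pre_x: "{y \<in> insert x S. rank y < rank x} = S"
      by auto
    have pre_v: "{y \<in> insert x S. rank y < rank v} = {y \<in> S. rank y < rank v}" if "v \<in> S" for v
      using insert.hyps(2)[OF that] by auto
    have "(\<Sum>v\<in>S. h (insert v {y \<in> insert x S. rank y < rank v}) - h {y \<in> insert x S. rank y < rank v})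
        = (\<Sum>v\<in>S. h (insert v {y \<in> S. rank y < rank v}) - h {y \<in> S. rank y < rank v})"
      by (intro sum.cong refl) (simp only: pre_v)
    also have "\<dots> = h S - h {}"
      using insert.IH insert.prems by (simp add: inj_on_insert)
    finally show ?thesis
      unfolding sum.insert[OF insert.hyps(1) False] pre_x by simp
  qed
qed

lemma obtain_rank_with_prefix:
  assumes "finite V"
  obtains rank :: "'a \<Rightarrow> bool \<times> nat"
  where "inj_on rank V" "\<And>x y. x \<in> U \<Longrightarrow> y \<notin> U \<Longrightarrow> rank x < rank y"
proof -
  obtain r :: "'a \<Rightarrow> nat" where "inj_on r V"
    using finite_imp_inj_to_nat_seg[OF assms] by blast
  then show thesis
    by (intro that[of "\<lambda>v. (v \<notin> U, r v)"]) (auto simp: inj_on_def)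
qed

text \<open>The chain-rule summand: \<open>|T|\<close> times the conditional entropy of \<open>v\<close> given the attributes
  of \<open>V\<close> ranked before it.\<close>

definition chain_gain :: "('v \<Rightarrow> 'd) set \<Rightarrow> 'v set \<Rightarrow> ('v \<Rightarrow> 'b::ord) \<Rightarrow> 'v \<Rightarrow> real" where
  "chain_gain T V rank v = scaled_entropy_gain T {x \<in> V. rank x < rank v} v"

lemma chain_gain_nonneg: "finite T \<Longrightarrow> 0 \<le> chain_gain T V rank v"
  by (simp add: chain_gain_def scaled_entropy_gain_nonneg)

lemma sum_chain_gain:
  fixes rank :: "'v \<Rightarrow> 'b::linorder"
  assumes "finite T" "T \<subseteq> extensional V" "finite V" "inj_on rank V"
  shows "(\<Sum>v\<in>V. chain_gain T V rank v) = card T * ln (card T)"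
  using sum_rank_increments[OF assms(3,4), of "scaled_entropy T"]
  by (simp add: chain_gain_def scaled_entropy_gain_def scaled_entropy_extensional[OF assms(1,2)])

lemma chain_gain_le:
  assumes "finite T" "B \<subseteq> {x \<in> V. rank x < rank v}"
  shows "chain_gain T V rank v \<le> scaled_entropy_gain T B v"
  unfolding chain_gain_def using assms by (rule scaled_entropy_gain_antimono)

lemma chain_gain_pair_le:
  fixes rank :: "'v \<Rightarrow> 'b::linorder"
  assumes fin: "finite T" and "inj_on rank V" "a \<in> V" "b \<in> V" "a \<noteq> b"
  shows "chain_gain T V rank a + chain_gain T V rank b \<le> scaled_entropy T {a, b}"
proof -
  have *: "chain_gain T V rank p + chain_gain T V rank q \<le> scaled_entropy T {p, q}"
    if "p \<in> V" "rank p < rank q" for p q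
  proof -
    have "chain_gain T V rank p \<le> scaled_entropy_gain T {} p"
      by (rule chain_gain_le[OF fin]) simp
    moreover have "chain_gain T V rank q \<le> scaled_entropy_gain T {p} q"
      by (rule chain_gain_le[OF fin]) (use that in simp)
    ultimately show ?thesis
      by (simp add: scaled_entropy_gain_def insert_commute)
  qed
  have "rank a \<noteq> rank b"
    using assms(2-5) by (auto simp: inj_on_def)
  then consider "rank a < rank b" | "rank b < rank a"
    by (meson linorder_neqE)
  then show ?thesis
    using *[of a b] *[of b a] assms(3,4) by cases (simp_all add: insert_commute add.commute)
qed

lemma AGM_ge_powr:
  assumes "N \<ge> 1" "frac_packing att E u"
  shows "N powr (\<Sum>x\<in>qvars att E. u x) \<le> AGM att E N"
proof -
  have "N powr (\<Sum>x\<in>qvars att E. w x) \<le> N powr card (qvars att E)"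
    if "frac_packing att E w" for w
  proof -
    have "(\<Sum>x\<in>qvars att E. w x) \<le> (\<Sum>x\<in>qvars att E. 1)"
      using that by (intro sum_mono) (auto simp: frac_packing_def)
    then show ?thesis
      using assms(1) by (simp add: powr_mono)
  qed
  then have "bdd_above {N powr (\<Sum>x\<in>qvars att E. w x) | w. frac_packing att E w}"
    by (intro bdd_aboveI) blast
  then show ?thesis
    unfolding AGM_def by (rule cSup_upper[rotated]) (use assms(2) in blast)
qed

lemma one_le_AGM: "N \<ge> 1 \<Longrightarrow> 1 \<le> AGM att E N"
  using AGM_ge_powr[where u = "\<lambda>_. 0"] by (simp add: frac_packing_def)

lemma le_AGM_if_vertex_weights:
  assumes N: "N \<ge> 1" and "0 < x"
    and nonneg: "\<And>v. v \<in> qvars att E \<Longrightarrow> 0 \<le> w v"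
    and edge: "\<And>r. r \<in> E \<Longrightarrow> w (fst (att r)) + w (snd (att r)) \<le> ln N"
    and sum: "(\<Sum>v\<in>qvars att E. w v) = ln x"
  shows "x \<le> AGM att E N"
proof -
  have w_le: "w v \<le> ln N" if v: "v \<in> qvars att E" for v
  proof -
    obtain r where r: "r \<in> E" "v = fst (att r) \<or> v = snd (att r)"
      using v unfolding qvars_def attrs_def by blast
    then have "0 \<le> w (fst (att r))" "0 \<le> w (snd (att r))"
      using nonneg by (auto simp: qvars_def attrs_def)
    then show ?thesis
      using edge[OF r(1)] r(2) by auto
  qed
  consider "ln N = 0" | "0 < ln N"
    using N by force
  then show ?thesis
  proof cases
    case 1
    then have "ln x = 0"
      using w_le nonneg by (simp add: sum[symmetric] order_antisym sum.neutral)
    then show ?thesis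
      using \<open>0 < x\<close> one_le_AGM[OF N] by simp
  next
    case 2
    define u where "u v = w v / ln N" for v
    have "frac_packing att E u"
      using nonneg w_le edge 2 by (auto simp: frac_packing_def u_def add_divide_distrib[symmetric])
    moreover have "N powr (\<Sum>v\<in>qvars att E. u v) = x"
      using sum 2 N \<open>0 < x\<close> by (simp add: u_def powr_def flip: sum_divide_distrib)
    ultimately show ?thesis
      using AGM_ge_powr[OF N] by metis
  qed
qed

lemma card_le_AGM_if_chain_gains_le:
  fixes rank :: "'v \<Rightarrow> 'b::linorder"
  assumes "finite E" "N \<ge> 1" "finite T" "T \<subseteq> extensional (qvars att E)"
    and "inj_on rank (qvars att E)"
    and edge: "\<And>r. r \<in> E \<Longrightarrow> chain_gain T (qvars att E) rank (fst (att r))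
                           + chain_gain T (qvars att E) rank (snd (att r)) \<le> card T * ln N"
  shows "card T \<le> AGM att E N"
proof (cases "T = {}")
  case True
  then show ?thesis
    using one_le_AGM[OF assms(2), where att = att and E = E] by simp
next
  case False
  then have n: "0 < real (card T)"
    using assms(3) by (simp add: card_gt_0_iff)
  have "finite (qvars att E)"
    using assms(1) by (simp add: qvars_def attrs_def)
  define w where "w v = chain_gain T (qvars att E) rank v / card T" for v
  show ?thesis
  proof (rule le_AGM_if_vertex_weights[OF assms(2) n, where w = w])
    show "(\<Sum>v\<in>qvars att E. w v) = ln (card T)"
      using sum_chain_gain[OF assms(3,4) \<open>finite (qvars att E)\<close> assms(5)] n
      by (simp add: w_def flip: sum_divide_distrib)
    show "w (fst (att r)) + w (snd (att r)) \<le> ln N" if "r \<in> E" for r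
      using edge[OF that] n by (simp add: w_def add_divide_distrib[symmetric] divide_le_eq mult.commute)
  qed (simp add: w_def chain_gain_nonneg[OF assms(3)])
qed

lemma njoin_pair_mem:
  "f \<in> njoin att D F \<Longrightarrow> r \<in> F \<Longrightarrow> (f (fst (att r)), f (snd (att r))) \<in> D r"
  by (simp add: njoin_def)

lemma njoin_extensional: "njoin att D F \<subseteq> extensional (\<Union>r\<in>F. attrs att r)"
  by (auto simp: njoin_def)

lemma finite_njoin:
  assumes "finite F" "\<And>r. r \<in> F \<Longrightarrow> finite (D r)"
  shows "finite (njoin att D F)"
proof (rule finite_subset)
  let ?W = "\<Union>r\<in>F. attrs att r" and ?vals = "\<Union>r\<in>F. fst ` D r \<union> snd ` D r"
  show "njoin att D F \<subseteq> PiE ?W (\<lambda>_. ?vals)"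
  proof
    fix f assume f: "f \<in> njoin att D F"
    have "f v \<in> ?vals" if "r \<in> F" "v \<in> attrs att r" for r v
      using njoin_pair_mem[OF f that(1)] that by (force simp: attrs_def)
    then have "f \<in> Pi ?W (\<lambda>_. ?vals)"
      by (intro Pi_I) blast
    moreover have "f \<in> extensional ?W"
      using f njoin_extensional[of att D F] by blast
    ultimately show "f \<in> PiE ?W (\<lambda>_. ?vals)"
      by (simp add: PiE_def)
  qed
  show "finite (PiE ?W (\<lambda>_. ?vals))"
    using assms by (intro finite_PiE) (auto simp: attrs_def)
qed

lemma card_restrict_pair_le:
  assumes "finite S" "\<And>g. g \<in> K \<Longrightarrow> (g a, g b) \<in> S"
  shows "card ((\<lambda>g. restrict g {a, b}) ` K) \<le> card S"
proof (rule card_inj_on_le[where f = "\<lambda>h. (h a, h b)"])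
  show "inj_on (\<lambda>h. (h a, h b)) ((\<lambda>g. restrict g {a, b}) ` K)"
    by (auto simp: inj_on_def restrict_def fun_eq_iff)
qed (use assms in auto)

lemma chain_gain_njoin_edge_le:
  fixes N :: real and rank :: "'v \<Rightarrow> 'b::linorder"
  assumes fin: "finite (njoin att D F)" and "inj_on rank V"
    and r: "r \<in> F" "fst (att r) \<in> V" "snd (att r) \<in> V" "fst (att r) \<noteq> snd (att r)"
    and D: "finite (D r)" "real (card (D r)) \<le> N" and "0 < N"
  shows "chain_gain (njoin att D F) V rank (fst (att r)) + chain_gain (njoin att D F) V rank (snd (att r))
       \<le> card (njoin att D F) * ln N"
proof -
  let ?T = "njoin att D F"
  have "card ((\<lambda>g. restrict g {fst (att r), snd (att r)}) ` ?T) \<le> card (D r)"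
    using njoin_pair_mem[OF _ r(1)] by (intro card_restrict_pair_le[OF D(1)])
  then have "card ((\<lambda>g. restrict g {fst (att r), snd (att r)}) ` fiber ?T {} f) \<le> N" for f
    using D(2) by simp
  from scaled_entropy_diff_le[OF fin empty_subsetI \<open>0 < N\<close> this]
  have "scaled_entropy ?T {fst (att r), snd (att r)} \<le> card ?T * ln N"
    by simp
  with chain_gain_pair_le[OF fin assms(2) r(2-4)] show ?thesis
    by linarith
qed

lemma chain_gain_njoin_light_le:
  fixes N :: real
  assumes fin: "finite (njoin att D F)" and r: "r \<in> F" "finite (D r)"
    and XY: "attrs att r = {X, Y}" and light: "light att D N r X" and "0 < N"
    and "X \<in> V" "rank X < rank Y"
  shows "chain_gain (njoin att D F) V rank Y \<le> card (njoin att D F) * ln N / 2"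
proof -
  let ?T = "njoin att D F"
  have "card ((\<lambda>g. restrict g {X, Y}) ` fiber ?T {X} f) \<le> sqrt N" for f
  proof -
    have "X = fst (att r) \<or> X = snd (att r)" "{X, Y} = {fst (att r), snd (att r)}"
      using XY by (auto simp: attrs_def doubleton_eq_iff)
    then have "(g (fst (att r)), g (snd (att r))) \<in> {t \<in> D r. tval att r X t = f X}"
      if "g \<in> fiber ?T {X} f" for g
      using that njoin_pair_mem[OF _ r(1)] by (auto simp: fiber_def tval_def)
    then have "card ((\<lambda>g. restrict g {X, Y}) ` fiber ?T {X} f) \<le> degree att D r X (f X)"
      unfolding degree_def \<open>{X, Y} = _\<close> using r(2) by (intro card_restrict_pair_le) auto
    then show ?thesis
      using light unfolding light_def by (meson of_nat_le_iff order_trans)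
  qed
  then have "scaled_entropy ?T {X, Y} - scaled_entropy ?T {X} \<le> card ?T * ln (sqrt N)"
    using \<open>0 < N\<close> by (intro scaled_entropy_diff_le[OF fin]) auto
  moreover have "chain_gain ?T V rank Y \<le> scaled_entropy_gain ?T {X} Y"
    using assms(7,8) by (intro chain_gain_le[OF fin]) simp
  ultimately show ?thesis
    using \<open>0 < N\<close> by (simp add: scaled_entropy_gain_def insert_commute ln_sqrt)
qed

lemma UN_attrs_touching_eq_qvars:
  assumes "U \<subseteq> qvars att E"
    and cover: "\<forall>Y\<in>qvars att E - U. \<exists>r\<in>E. \<exists>X\<in>U. attrs att r = {X, Y}"
  shows "(\<Union>r\<in>{r \<in> E. attrs att r \<inter> U \<noteq> {}}. attrs att r) = qvars att E"
proof
  show "qvars att E \<subseteq> (\<Union>r\<in>{r \<in> E. attrs att r \<inter> U \<noteq> {}}. attrs att r)"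
  proof
    fix v assume v: "v \<in> qvars att E"
    show "v \<in> (\<Union>r\<in>{r \<in> E. attrs att r \<inter> U \<noteq> {}}. attrs att r)"
    proof (cases "v \<in> U")
      case True
      then show ?thesis using v by (auto simp: qvars_def)
    next
      case False
      then obtain r X where "r \<in> E" "X \<in> U" "attrs att r = {X, v}"
        using cover v by blast
      then show ?thesis by auto
    qed
  qed
qed (auto simp: qvars_def)

theorem mainTheorem5:
  fixes att :: "'r \<Rightarrow> 'v \<times> 'v" and E :: "'r set" and D :: "'r \<Rightarrow> ('d \<times> 'd) set"
    and N :: real and U :: "'v set"
  assumes finE: "finite E"
    and binary: "\<forall>r\<in>E. fst (att r) \<noteq> snd (att r)"
    and finD: "\<forall>r\<in>E. finite (D r)"
    and sizeN: "\<forall>r\<in>E. real (card (D r)) \<le> N"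
    and N1: "N \<ge> 1"
    and Usub: "U \<subset> qvars att E"
    and cover: "\<forall>Y\<in>qvars att E - U. \<exists>r\<in>E. \<exists>X\<in>U. attrs att r = {X, Y}"
    and lightU: "\<forall>r\<in>E. \<forall>X Y. attrs att r = {X, Y} \<and> X \<in> U \<and> Y \<notin> U \<longrightarrow> light att D N r X"
  shows "finite (njoin att D {r\<in>E. attrs att r \<inter> U \<noteq> {}}) \<and>
         real (card (njoin att D {r\<in>E. attrs att r \<inter> U \<noteq> {}})) \<le> AGM att E N"
proof -
  define F where "F = {r\<in>E. attrs att r \<inter> U \<noteq> {}}"
  define V where "V = qvars att E"
  define T where "T = njoin att D F"
  have finT: "finite T"
    unfolding T_def F_def using finE finD by (intro finite_njoin) auto
  have T_ext: "T \<subseteq> extensional V"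
    using njoin_extensional[of att D F] UN_attrs_touching_eq_qvars[OF psubset_imp_subset[OF Usub] cover]
    unfolding T_def F_def V_def by simp
  have "finite V"
    using finE by (simp add: V_def qvars_def attrs_def)
  then obtain rank :: "'v \<Rightarrow> bool \<times> nat"
    where rank: "inj_on rank V" "\<And>x y. x \<in> U \<Longrightarrow> y \<notin> U \<Longrightarrow> rank x < rank y"
    using obtain_rank_with_prefix[of V U] by blast
  have light: "chain_gain T V rank y \<le> card T * ln N / 2" if y: "y \<in> V - U" for y
  proof -
    obtain r X where r: "r \<in> E" "X \<in> U" "attrs att r = {X, y}"
      using cover y unfolding V_def by blast
    then have "r \<in> F" "X \<in> V" "light att D N r X"
      using Usub lightU y by (auto simp: F_def V_def)
    then show ?thesis
      unfolding T_def using r y finD N1 rank(2)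
      by (intro chain_gain_njoin_light_le[OF finT[unfolded T_def]]) auto
  qed
  have "card T \<le> AGM att E N"
  proof (rule card_le_AGM_if_chain_gains_le[OF finE N1 finT, where att = att, folded V_def,
        OF T_ext rank(1)])
    fix r assume r: "r \<in> E"
    have ends: "fst (att r) \<in> V" "snd (att r) \<in> V"
      using r by (auto simp: V_def qvars_def attrs_def)
    show "chain_gain T V rank (fst (att r)) + chain_gain T V rank (snd (att r)) \<le> card T * ln N"
    proof (cases "r \<in> F")
      case True
      then show ?thesis
        unfolding T_def using binary finD sizeN r ends N1
        by (intro chain_gain_njoin_edge_le[OF finT[unfolded T_def] rank(1)]) auto
    next
      case False
      then have "fst (att r) \<in> V - U" "snd (att r) \<in> V - U"
        using r ends by (auto simp: F_def attrs_def)
      then show ?thesis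
        using light[of "fst (att r)"] light[of "snd (att r)"] by linarith
    qed
  qed
  then show ?thesis
    using finT by (simp add: T_def F_def)
qed

end
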